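(* For every instance of DCIC there exists a threshold $\tau\ge 0$ such that, for every agent utility distribution and every best response of the agent, the SPMI with threshold $\tau$ yields principal's expected utility, excluding the delegation cost, of at least $\frac12\,\mathbb E\big[\max_{i\in[n]}(X_i-c_i)^+\big]$.
   Context: Delegated choice with inspection cost (DCIC). There are $n$ alternatives indexed by $[n]=\{1,\dots,n\}$. Each alternative $i$ has a principal's utility $X_i\ge 0$ and an agent's utility $Y_i\ge 0$; the pairs $(X_i,Y_i)$, $i\in[n]$, are mutually independent random vectors (with $X_i$ and $Y_i$ possibly dependent); the principal knows the distributions of the $X_i$. Alternative $i$ has a deterministic inspection cost $c_i\ge 0$. The SPMI (single-proposal mechanism with inspection) with threshold $\tau$ is the delegating mechanism with signal set $[n]\cup\{\perp\}$: the agent observes all $(X_i,Y_i)$ and sends a signal; on signal $j\in[n]$ the principal inspects $j$ (paying $c_j$) and selects $j$ iff $X_j-c_j\ge\tau$ (otherwise selects nothing); on signal $\perp$ nothing is inspected or selected. The agent's utility is $Y_k$ if $k$ is selected and $0$ if nothing is selected; he sends a signal maximizing it, breaking ties in favor of the principal (among signals giving him equal utility he sends one maximizing the principal's realized utility $\sum_i(\mathbf A_iX_i-\mathbf I_ic_i)$, where $\mathbf A_i,\mathbf I_i$ indicate selection/inspection of $i$). $(z)^+=\max(z,0)$. *)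

theory Defs
  imports "HOL-Probability.Probability"
begin

text \<open>Signals: None is the null signal (bottom), Some j proposes alternative j.
  x, y are the realized principal / agent utilities, c the inspection costs.\<close>

definition valid_signal :: "nat \<Rightarrow> nat option \<Rightarrow> bool" where
  "valid_signal n s \<longleftrightarrow> s = None \<or> (\<exists>j\<in>{1..n}. s = Some j)"

definition spmi_agent_util ::
  "real \<Rightarrow> (nat \<Rightarrow> real) \<Rightarrow> (nat \<Rightarrow> real) \<Rightarrow> (nat \<Rightarrow> real) \<Rightarrow> nat option \<Rightarrow> real" where
  "spmi_agent_util tau c x y s =
     (case s of None \<Rightarrow> 0 | Some j \<Rightarrow> (if x j - c j \<ge> tau then y j else 0))"

text \<open>Principal's realized utility (sum of A_i X_i - I_i c_i) under the SPMI.\<close>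
definition spmi_principal_util ::
  "real \<Rightarrow> (nat \<Rightarrow> real) \<Rightarrow> (nat \<Rightarrow> real) \<Rightarrow> nat option \<Rightarrow> real" where
  "spmi_principal_util tau c x s =
     (case s of None \<Rightarrow> 0 | Some j \<Rightarrow> (if x j - c j \<ge> tau then x j else 0) - c j)"

text \<open>Best response of the agent (ties broken in favour of the principal).\<close>
definition spmi_best_response ::
  "nat \<Rightarrow> real \<Rightarrow> (nat \<Rightarrow> real) \<Rightarrow> (nat \<Rightarrow> real) \<Rightarrow> (nat \<Rightarrow> real) \<Rightarrow> nat option \<Rightarrow> bool" where
  "spmi_best_response n tau c x y s \<longleftrightarrow>
     valid_signal n s \<and>
     (\<forall>s'. valid_signal n s' \<longrightarrow> spmi_agent_util tau c x y s' \<le> spmi_agent_util tau c x y s) \<and>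
     (\<forall>s'. valid_signal n s' \<and> spmi_agent_util tau c x y s' = spmi_agent_util tau c x y s
            \<longrightarrow> spmi_principal_util tau c x s' \<le> spmi_principal_util tau c x s)"

end

theory Submission
  imports Defs
begin

(* Choose tau with tau = (SUM i. E[(X_i - c_i - tau)^+]); it exists by the intermediate value
   theorem, the right-hand side being continuous, nonnegative and nonincreasing in tau.
   Pointwise max_i (X_i - c_i)^+ <= tau + (SUM i. (X_i - c_i - tau)^+), so the benchmark is at
   most 2 tau.  Conversely, whenever some alternative is acceptable (X_i - c_i >= tau) a best
   responding agent proposes an acceptable one, either because he strictly prefers it or because
   the tie-break favours the principal; if i is the only acceptable alternative the principal
   gets X_i - c_i.  With p_j = P(X_j - c_j < tau), independence gives
     E[util] >= tau (1 - PROD p_j) + (SUM i. E[(X_i - c_i - tau)^+] * PROD_{j ~= i} p_j)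
             >= tau (1 - PROD p_j) + tau * PROD p_j = tau. *)

lemma prod_of_bool_eq:
  "finite A \<Longrightarrow> (\<Prod>x\<in>A. of_bool (P x) :: 'b::comm_semiring_1) = of_bool (\<forall>x\<in>A. P x)"
  by (induction A rule: finite_induct) auto

lemma spmi_best_response_principal_util_nonneg:
  assumes br: "spmi_best_response n tau c x y s" and none: "\<forall>j\<in>{1..n}. x j - c j < tau"
  shows "0 \<le> spmi_principal_util tau c x s"
proof -
  have "valid_signal n None" by (simp add: valid_signal_def)
  moreover have "spmi_agent_util tau c x y None = spmi_agent_util tau c x y s"
    using br none by (auto simp: spmi_best_response_def valid_signal_def spmi_agent_util_def)
  ultimately show ?thesis
    using br unfolding spmi_best_response_def by (force simp: spmi_principal_util_def)
qed

lemma spmi_best_response_accepts: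
  assumes br: "spmi_best_response n tau c x y s" and y_nonneg: "\<forall>i\<in>{1..n}. 0 \<le> y i"
    and k: "k \<in> {1..n}" "tau \<le> x k - c k"
  obtains j where "j \<in> {1..n}" "tau \<le> x j - c j" "x j - c j \<le> spmi_principal_util tau c x s"
proof -
  have valid: "valid_signal n s" and "valid_signal n (Some k)"
    using br k by (auto simp: spmi_best_response_def valid_signal_def)
  then have k_le: "y k \<le> spmi_agent_util tau c x y s"
    using br k by (force simp: spmi_best_response_def spmi_agent_util_def)
  have "0 \<le> y k" using y_nonneg k(1) by blast
  show ?thesis
  proof (cases "spmi_agent_util tau c x y s = y k")
    case True
    \<comment> \<open>the agent is indifferent to proposing k, so the tie-break favours the principal\<close>
    then have "spmi_principal_util tau c x (Some k) \<le> spmi_principal_util tau c x s"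
      using br \<open>valid_signal n (Some k)\<close> k
      by (auto simp: spmi_best_response_def spmi_agent_util_def)
    with k show ?thesis by (intro that) (auto simp: spmi_principal_util_def)
  next
    case False
    then obtain j where "s = Some j" "j \<in> {1..n}" "tau \<le> x j - c j"
      using valid k_le \<open>0 \<le> y k\<close> by (auto simp: valid_signal_def spmi_agent_util_def split: if_splits)
    then show ?thesis by (intro that) (auto simp: spmi_principal_util_def)
  qed
qed

lemma prod_below_threshold_eq:
  fixes z :: "'i \<Rightarrow> real"
  assumes "finite I"
  shows "(\<Prod>j\<in>I. of_bool (z j < t) :: real) = of_bool ({j\<in>I. t \<le> z j} = {})"
  using assms by (auto simp: prod_of_bool_eq not_le)

lemma excess_mult_prod_below_threshold_eq:
  fixes z :: "'i \<Rightarrow> real"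
  assumes "finite I" "i \<in> I"
  shows "max 0 (z i - t) * (\<Prod>j\<in>I-{i}. of_bool (z j < t))
           = of_bool ({j\<in>I. t \<le> z j} = {i}) * (z i - t)"
proof (cases "t \<le> z i")
  case True
  then have "{j\<in>I. t \<le> z j} = {i} \<longleftrightarrow> {j\<in>I-{i}. t \<le> z j} = {}"
    using assms(2) by blast
  with True show ?thesis
    using prod_below_threshold_eq[of "I-{i}" z t] assms(1) by simp
next
  case False
  then show ?thesis using assms(2) by auto
qed

lemma spmi_principal_util_lower_bound:
  assumes br: "spmi_best_response n tau c x y s" and y_nonneg: "\<forall>i\<in>{1..n}. 0 \<le> y i"
  shows "tau * (1 - (\<Prod>j\<in>{1..n}. of_bool (x j - c j < tau)))
           + (\<Sum>i\<in>{1..n}. max 0 (x i - c i - tau) * (\<Prod>j\<in>{1..n}-{i}. of_bool (x j - c j < tau)))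
         \<le> spmi_principal_util tau c x s"
proof -
  define acc where "acc = {j\<in>{1..n}. tau \<le> x j - c j}"
  have prod_eq: "(\<Prod>j\<in>{1..n}. of_bool (x j - c j < tau)) = (of_bool (acc = {}) :: real)"
    unfolding acc_def by (rule prod_below_threshold_eq) simp
  have sum_eq: "(\<Sum>i\<in>{1..n}. max 0 (x i - c i - tau) * (\<Prod>j\<in>{1..n}-{i}. of_bool (x j - c j < tau)))
      = (\<Sum>i\<in>{1..n}. of_bool (acc = {i}) * (x i - c i - tau))"
    unfolding acc_def by (intro sum.cong refl excess_mult_prod_below_threshold_eq) auto
  show ?thesis
  proof (cases "acc = {}")
    case True
    then have "\<forall>j\<in>{1..n}. x j - c j < tau" by (auto simp: acc_def)
    then show ?thesis unfolding sum_eq prod_eq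
      using True spmi_best_response_principal_util_nonneg[OF br] by simp
  next
    case False
    then obtain k where "k \<in> {1..n}" "tau \<le> x k - c k" by (auto simp: acc_def)
    then obtain j where "j \<in> {1..n}" "tau \<le> x j - c j"
      and j_util: "x j - c j \<le> spmi_principal_util tau c x s"
      by (rule spmi_best_response_accepts[OF br y_nonneg])
    then have "j \<in> acc" by (simp add: acc_def)
    have "(\<Sum>i\<in>{1..n}. of_bool (acc = {i}) * (x i - c i - tau)) \<le> x j - c j - tau"
    proof (cases "acc = {j}")
      case True
      then have "{1..n} \<inter> {i. acc = {i}} = {j}" using \<open>j \<in> {1..n}\<close> by auto
      then show ?thesis by simp
    next
      case False
      then have "{1..n} \<inter> {i. acc = {i}} = {}" using \<open>j \<in> acc\<close> by auto
      then show ?thesis using \<open>tau \<le> x j - c j\<close> by simp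
    qed
    then show ?thesis unfolding sum_eq prod_eq using False j_util by simp
  qed
qed

lemma exists_nonneg_fixed_point:
  fixes f :: "real \<Rightarrow> real"
  assumes cont: "continuous_on {0..} f" and "0 \<le> f 0" and le_f0: "\<And>t. 0 \<le> t \<Longrightarrow> f t \<le> f 0"
  shows "\<exists>t\<ge>0. f t = t"
proof -
  have "continuous_on {0..f 0} (\<lambda>t. t - f t)"
    by (intro continuous_on_diff continuous_on_id continuous_on_subset[OF cont]) auto
  then have "\<exists>t. 0 \<le> t \<and> t \<le> f 0 \<and> t - f t = 0"
    using \<open>0 \<le> f 0\<close> le_f0[of "f 0"] by (intro IVT') auto
  then show ?thesis by auto
qed

lemma (in prob_space) integrable_max_0_diff:
  fixes f :: "'a \<Rightarrow> real"
  shows "integrable M f \<Longrightarrow> integrable M (\<lambda>x. max 0 (f x - t))"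
  by (intro integrable_max Bochner_Integration.integrable_diff) auto

lemma (in prob_space) expected_excess_antimono:
  fixes f :: "'a \<Rightarrow> real"
  assumes "integrable M f" "s \<le> t"
  shows "(\<integral>x. max 0 (f x - t) \<partial>M) \<le> (\<integral>x. max 0 (f x - s) \<partial>M)"
  using assms by (intro integral_mono integrable_max_0_diff) auto

lemma (in prob_space) continuous_on_expected_excess:
  fixes f :: "'a \<Rightarrow> real"
  assumes f: "integrable M f"
  shows "continuous_on A (\<lambda>t. \<integral>x. max 0 (f x - t) \<partial>M)"
proof -
  have shift: "(\<integral>x. max 0 (f x - t) \<partial>M) \<le> (\<integral>x. max 0 (f x - s) \<partial>M) + \<bar>t - s\<bar>" for s t
  proof -
    have "(\<integral>x. max 0 (f x - t) \<partial>M) \<le> (\<integral>x. max 0 (f x - s) + \<bar>t - s\<bar> \<partial>M)"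
      using f by (intro integral_mono integrable_max_0_diff Bochner_Integration.integrable_add) auto
    also have "\<dots> = (\<integral>x. max 0 (f x - s) \<partial>M) + \<bar>t - s\<bar>"
      using f by (simp add: integrable_max_0_diff prob_space)
    finally show ?thesis .
  qed
  have "1-lipschitz_on A (\<lambda>t. \<integral>x. max 0 (f x - t) \<partial>M)"
  proof (rule lipschitz_onI)
    fix s t :: real
    show "dist (\<integral>x. max 0 (f x - s) \<partial>M) (\<integral>x. max 0 (f x - t) \<partial>M) \<le> 1 * dist s t"
      using shift[of s t] shift[of t s] by (simp add: dist_real_def abs_le_iff abs_minus_commute)
  qed simp
  then show ?thesis by (rule lipschitz_on_continuous_on)
qed

lemma threshold_exists:
  fixes D :: "'i \<Rightarrow> real measure" and c :: "'i \<Rightarrow> real"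
  assumes "finite I" and D: "\<And>i. i \<in> I \<Longrightarrow> prob_space (D i)" "\<And>i. i \<in> I \<Longrightarrow> integrable (D i) (\<lambda>x. x)"
  shows "\<exists>tau\<ge>0. (\<Sum>i\<in>I. \<integral>x. max 0 (x - c i - tau) \<partial>D i) = tau"
proof (rule exists_nonneg_fixed_point)
  have integrable: "integrable (D i) (\<lambda>x. x - c i)" if "i \<in> I" for i
  proof -
    interpret prob_space "D i" using D(1) that .
    show ?thesis using D(2) that by (intro Bochner_Integration.integrable_diff) auto
  qed
  show "continuous_on {0..} (\<lambda>t. \<Sum>i\<in>I. \<integral>x. max 0 (x - c i - t) \<partial>D i)"
    using D integrable by (intro continuous_on_sum prob_space.continuous_on_expected_excess) auto
  show "0 \<le> (\<Sum>i\<in>I. \<integral>x. max 0 (x - c i - 0) \<partial>D i)"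
    by (intro sum_nonneg integral_nonneg) auto
  show "(\<Sum>i\<in>I. \<integral>x. max 0 (x - c i - t) \<partial>D i) \<le> (\<Sum>i\<in>I. \<integral>x. max 0 (x - c i - 0) \<partial>D i)"
    if "0 \<le> t" for t
    using D integrable that by (intro sum_mono prob_space.expected_excess_antimono) auto
qed

lemma (in prob_space) indep_vars_integral_prod_compose:
  fixes f :: "'i \<Rightarrow> 'b \<Rightarrow> real"
  assumes "indep_vars N X I" "finite I"
    and "\<And>i. i \<in> I \<Longrightarrow> f i \<in> borel_measurable (N i)"
    and "\<And>i. i \<in> I \<Longrightarrow> integrable M (\<lambda>\<omega>. f i (X i \<omega>))"
  shows "(\<integral>\<omega>. (\<Prod>i\<in>I. f i (X i \<omega>)) \<partial>M) = (\<Prod>i\<in>I. \<integral>\<omega>. f i (X i \<omega>) \<partial>M)"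
    and "integrable M (\<lambda>\<omega>. \<Prod>i\<in>I. f i (X i \<omega>))"
  using indep_vars_compose2[OF assms(1,3)] assms(2,4)
  by (auto intro: indep_vars_lebesgue_integral indep_vars_integrable)

lemma sum_mult_prod_le_sum_mult_prod_remove:
  fixes e p :: "'i \<Rightarrow> real"
  assumes "finite I" "\<And>j. j \<in> I \<Longrightarrow> 0 \<le> p j \<and> p j \<le> 1" "\<And>i. i \<in> I \<Longrightarrow> 0 \<le> e i"
  shows "(\<Sum>i\<in>I. e i) * (\<Prod>j\<in>I. p j) \<le> (\<Sum>i\<in>I. e i * (\<Prod>j\<in>I-{i}. p j))"
proof -
  have "(\<Prod>j\<in>I. p j) \<le> (\<Prod>j\<in>I-{i}. p j)" if "i \<in> I" for i
  proof -
    have "0 \<le> (\<Prod>j\<in>I-{i}. p j)" using assms(2) by (intro prod_nonneg) auto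
    then show ?thesis
      using assms(1,2) that by (simp add: prod.remove mult_left_le_one_le)
  qed
  then show ?thesis
    unfolding sum_distrib_right using assms by (intro sum_mono mult_left_mono) auto
qed

lemma Max_le_threshold_plus_excess:
  fixes z :: "'i \<Rightarrow> real"
  assumes "finite I" "0 \<le> t"
  shows "Max (insert 0 (z ` I)) \<le> t + (\<Sum>i\<in>I. max 0 (z i - t))"
proof -
  have "z i \<le> t + (\<Sum>i\<in>I. max 0 (z i - t))" if "i \<in> I" for i
    using member_le_sum[of i I "\<lambda>i. max 0 (z i - t)"] assms that by fastforce
  then show ?thesis using assms by (simp add: sum_nonneg)
qed

lemma (in prob_space) expectation_Max_le_threshold_plus_excess:
  fixes Z :: "'i \<Rightarrow> 'a \<Rightarrow> real"
  assumes "finite I" "0 \<le> t" "\<And>i. i \<in> I \<Longrightarrow> integrable M (Z i)"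
  shows "(\<integral>\<omega>. Max (insert 0 ((\<lambda>i. Z i \<omega>) ` I)) \<partial>M)
           \<le> t + (\<Sum>i\<in>I. \<integral>\<omega>. max 0 (Z i \<omega> - t) \<partial>M)"
proof -
  have "(\<integral>\<omega>. Max (insert 0 ((\<lambda>i. Z i \<omega>) ` I)) \<partial>M) \<le> (\<integral>\<omega>. t + (\<Sum>i\<in>I. max 0 (Z i \<omega> - t)) \<partial>M)"
    using assms
    by (intro integral_mono' Max_le_threshold_plus_excess Bochner_Integration.integrable_add
        Bochner_Integration.integrable_sum integrable_max_0_diff) (auto intro!: add_nonneg_nonneg sum_nonneg)
  also have "\<dots> = t + (\<Sum>i\<in>I. \<integral>\<omega>. max 0 (Z i \<omega> - t) \<partial>M)"
    using assms by (simp add: integrable_max_0_diff integral_sum prob_space)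
  finally show ?thesis .
qed

locale spmi_setting = prob_space M for M :: "'a measure" +
  fixes n :: nat and c :: "nat \<Rightarrow> real" and tau :: real
    and X Y :: "nat \<Rightarrow> 'a \<Rightarrow> real" and \<sigma> :: "(nat \<Rightarrow> real) \<Rightarrow> (nat \<Rightarrow> real) \<Rightarrow> nat option"
  assumes integrable_X: "i \<in> {1..n} \<Longrightarrow> integrable M (X i)"
    and indep_X: "indep_vars (\<lambda>_. borel) X {1..n}"
    and Y_nonneg: "i \<in> {1..n} \<Longrightarrow> \<omega> \<in> space M \<Longrightarrow> 0 \<le> Y i \<omega>"
    and signal_measurable: "(\<lambda>\<omega>. \<sigma> (\<lambda>i. X i \<omega>) (\<lambda>i. Y i \<omega>)) \<in> M \<rightarrow>\<^sub>M count_space UNIV"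
    and best_response: "\<omega> \<in> space M \<Longrightarrow>
      spmi_best_response n tau c (\<lambda>i. X i \<omega>) (\<lambda>i. Y i \<omega>) (\<sigma> (\<lambda>i. X i \<omega>) (\<lambda>i. Y i \<omega>))"
begin

definition signal :: "'a \<Rightarrow> nat option" where
  "signal \<omega> = \<sigma> (\<lambda>i. X i \<omega>) (\<lambda>i. Y i \<omega>)"

definition principal_util :: "'a \<Rightarrow> real" where
  "principal_util \<omega> = spmi_principal_util tau c (\<lambda>i. X i \<omega>) (signal \<omega>)"

definition rejected :: "nat \<Rightarrow> 'a \<Rightarrow> real" where
  "rejected j \<omega> = of_bool (X j \<omega> - c j < tau)"

definition excess :: "nat \<Rightarrow> 'a \<Rightarrow> real" where
  "excess i \<omega> = max 0 (X i \<omega> - c i - tau)"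

lemma signal_valid: "\<omega> \<in> space M \<Longrightarrow> valid_signal n (signal \<omega>)"
  using best_response by (simp add: signal_def spmi_best_response_def)

lemma borel_measurable_principal_util: "principal_util \<in> borel_measurable M"
proof -
  let ?J = "insert None (Some ` {1..n})"
  have signal: "signal \<in> M \<rightarrow>\<^sub>M count_space ?J"
  proof (rule measurable_count_space_extend[OF subset_UNIV])
    show "signal \<in> space M \<rightarrow> ?J"
      using signal_valid by (auto simp: valid_signal_def)
    show "signal \<in> M \<rightarrow>\<^sub>M count_space UNIV"
      using signal_measurable unfolding signal_def[abs_def] .
  qed
  have util: "(\<lambda>\<omega>. spmi_principal_util tau c (\<lambda>i. X i \<omega>) s) \<in> borel_measurable M" if "s \<in> ?J" for s
  proof (cases s)
    case (Some j)
    then have [measurable]: "X j \<in> borel_measurable M" using that integrable_X by auto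
    show ?thesis unfolding Some spmi_principal_util_def option.case by measurable
  qed (simp add: spmi_principal_util_def)
  show ?thesis
    unfolding principal_util_def[abs_def] by (rule measurable_compose_countable'[OF util signal]) auto
qed

lemma integrable_principal_util: "integrable M principal_util"
proof (rule Bochner_Integration.integrable_bound[OF _ borel_measurable_principal_util])
  show "integrable M (\<lambda>\<omega>. \<Sum>i\<in>{1..n}. \<bar>X i \<omega>\<bar> + \<bar>c i\<bar>)"
    using integrable_X by (intro Bochner_Integration.integrable_sum Bochner_Integration.integrable_add) auto
  show "AE \<omega> in M. norm (principal_util \<omega>) \<le> norm (\<Sum>i\<in>{1..n}. \<bar>X i \<omega>\<bar> + \<bar>c i\<bar>)"
  proof (rule AE_I2)
    fix \<omega> assume "\<omega> \<in> space M"
    have "\<bar>principal_util \<omega>\<bar> \<le> (\<Sum>i\<in>{1..n}. \<bar>X i \<omega>\<bar> + \<bar>c i\<bar>)"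
    proof (cases "signal \<omega>")
      case None
      then show ?thesis by (simp add: principal_util_def spmi_principal_util_def sum_nonneg)
    next
      case (Some j)
      then have "j \<in> {1..n}" using signal_valid[OF \<open>\<omega> \<in> space M\<close>] by (simp add: valid_signal_def)
      have "\<bar>principal_util \<omega>\<bar> \<le> \<bar>X j \<omega>\<bar> + \<bar>c j\<bar>"
        using Some by (simp add: principal_util_def spmi_principal_util_def abs_triangle_ineq4)
      also have "\<dots> \<le> (\<Sum>i\<in>{1..n}. \<bar>X i \<omega>\<bar> + \<bar>c i\<bar>)"
        using \<open>j \<in> {1..n}\<close> by (intro member_le_sum) auto
      finally show ?thesis .
    qed
    then show "norm (principal_util \<omega>) \<le> norm (\<Sum>i\<in>{1..n}. \<bar>X i \<omega>\<bar> + \<bar>c i\<bar>)" by simp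
  qed
qed

lemma principal_util_lower_bound:
  assumes "\<omega> \<in> space M"
  shows "tau * (1 - (\<Prod>j\<in>{1..n}. rejected j \<omega>)) + (\<Sum>i\<in>{1..n}. excess i \<omega> * (\<Prod>j\<in>{1..n}-{i}. rejected j \<omega>))
           \<le> principal_util \<omega>"
  using spmi_principal_util_lower_bound[OF best_response[OF assms]] Y_nonneg[OF _ assms]
  by (simp add: principal_util_def signal_def rejected_def excess_def)

lemma integrable_rejected:
  assumes "j \<in> {1..n}"
  shows "integrable M (rejected j)"
proof -
  have [measurable]: "X j \<in> borel_measurable M" using integrable_X[OF assms] by simp
  show ?thesis unfolding rejected_def by (rule integrable_const_bound[where B = 1]) auto
qed

lemma integrable_excess: "i \<in> {1..n} \<Longrightarrow> integrable M (excess i)"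
  unfolding excess_def using integrable_X by (intro integrable_max_0_diff Bochner_Integration.integrable_diff) auto

lemma expectation_rejected_bounds:
  assumes "j \<in> {1..n}"
  shows "0 \<le> expectation (rejected j) \<and> expectation (rejected j) \<le> 1"
proof
  show "0 \<le> expectation (rejected j)" by (simp add: rejected_def)
  have "expectation (rejected j) \<le> expectation (\<lambda>_. 1)"
    using integrable_rejected[OF assms] by (intro integral_mono) (auto simp: rejected_def)
  then show "expectation (rejected j) \<le> 1" by (simp add: prob_space)
qed

lemma
  assumes "J \<subseteq> {1..n}"
  shows expectation_prod_rejected: "expectation (\<lambda>\<omega>. \<Prod>j\<in>J. rejected j \<omega>) = (\<Prod>j\<in>J. expectation (rejected j))"
    and integrable_prod_rejected: "integrable M (\<lambda>\<omega>. \<Prod>j\<in>J. rejected j \<omega>)"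
proof -
  have meas: "(\<lambda>x. of_bool (x - c j < tau) :: real) \<in> borel_measurable borel" for j
    by measurable
  have int: "integrable M (\<lambda>\<omega>. of_bool (X j \<omega> - c j < tau) :: real)" if "j \<in> J" for j
    using integrable_rejected[of j] assms that unfolding rejected_def[abs_def] by blast
  note prod = indep_vars_integral_prod_compose[OF indep_vars_subset[OF indep_X assms] finite_subset[OF assms finite_atLeastAtMost],
      where f = "\<lambda>j x. of_bool (x - c j < tau)", OF meas int]
  show "expectation (\<lambda>\<omega>. \<Prod>j\<in>J. rejected j \<omega>) = (\<Prod>j\<in>J. expectation (rejected j))"
    unfolding rejected_def[abs_def] by (rule prod(1))
  show "integrable M (\<lambda>\<omega>. \<Prod>j\<in>J. rejected j \<omega>)"
    unfolding rejected_def[abs_def] by (rule prod(2))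
qed

lemma
  assumes i: "i \<in> {1..n}"
  shows expectation_excess_mult_prod_rejected:
      "expectation (\<lambda>\<omega>. excess i \<omega> * (\<Prod>j\<in>{1..n}-{i}. rejected j \<omega>))
         = expectation (excess i) * (\<Prod>j\<in>{1..n}-{i}. expectation (rejected j))"
    and integrable_excess_mult_prod_rejected:
      "integrable M (\<lambda>\<omega>. excess i \<omega> * (\<Prod>j\<in>{1..n}-{i}. rejected j \<omega>))"
proof -
  define f where "f j x = (if j = i then max 0 (x - c i - tau) else of_bool (x - c j < tau) :: real)" for j x
  have meas: "f j \<in> borel_measurable borel" for j
    unfolding f_def by measurable
  have f_X: "(\<lambda>\<omega>. f j (X j \<omega>)) = (if j = i then excess i else rejected j)" for j
    by (auto simp: f_def excess_def rejected_def)
  have int: "integrable M (\<lambda>\<omega>. f j (X j \<omega>))" if "j \<in> {1..n}" for j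
    unfolding f_X using that integrable_excess integrable_rejected by simp
  have split: "(\<Prod>j\<in>{1..n}. g j) = g i * (\<Prod>j\<in>{1..n}-{i}. g j)" for g :: "nat \<Rightarrow> real"
    using i by (simp add: prod.remove)
  note prod = indep_vars_integral_prod_compose[OF indep_X finite_atLeastAtMost, where f = f, OF meas int]
  have "(\<lambda>\<omega>. \<Prod>j\<in>{1..n}. f j (X j \<omega>)) = (\<lambda>\<omega>. excess i \<omega> * (\<Prod>j\<in>{1..n}-{i}. rejected j \<omega>))"
    unfolding split by (auto simp: f_X[THEN fun_cong] intro!: prod.cong)
  moreover have "(\<Prod>j\<in>{1..n}. expectation (\<lambda>\<omega>. f j (X j \<omega>)))
      = expectation (excess i) * (\<Prod>j\<in>{1..n}-{i}. expectation (rejected j))"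
    unfolding split f_X by (auto intro!: prod.cong)
  ultimately show "expectation (\<lambda>\<omega>. excess i \<omega> * (\<Prod>j\<in>{1..n}-{i}. rejected j \<omega>))
         = expectation (excess i) * (\<Prod>j\<in>{1..n}-{i}. expectation (rejected j))"
    and "integrable M (\<lambda>\<omega>. excess i \<omega> * (\<Prod>j\<in>{1..n}-{i}. rejected j \<omega>))"
    using prod by simp_all
qed

lemma expected_principal_util_ge_threshold:
  assumes threshold: "(\<Sum>i\<in>{1..n}. expectation (excess i)) = tau"
  shows "tau \<le> expectation principal_util"
proof -
  let ?p = "\<lambda>j. expectation (rejected j)" and ?e = "\<lambda>i. expectation (excess i)"
  let ?bound = "\<lambda>\<omega>. tau * (1 - (\<Prod>j\<in>{1..n}. rejected j \<omega>))
      + (\<Sum>i\<in>{1..n}. excess i \<omega> * (\<Prod>j\<in>{1..n}-{i}. rejected j \<omega>))"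
  have integrable_bound: "integrable M ?bound"
    using integrable_prod_rejected[of "{1..n}"] integrable_excess_mult_prod_rejected
    by (intro Bochner_Integration.integrable_add Bochner_Integration.integrable_mult_right
        Bochner_Integration.integrable_diff Bochner_Integration.integrable_sum) auto
  have "tau = tau * (1 - (\<Prod>j\<in>{1..n}. ?p j)) + (\<Sum>i\<in>{1..n}. ?e i) * (\<Prod>j\<in>{1..n}. ?p j)"
    unfolding threshold by algebra
  also have "\<dots> \<le> tau * (1 - (\<Prod>j\<in>{1..n}. ?p j)) + (\<Sum>i\<in>{1..n}. ?e i * (\<Prod>j\<in>{1..n}-{i}. ?p j))"
    using expectation_rejected_bounds
    by (intro add_left_mono sum_mult_prod_le_sum_mult_prod_remove) (auto simp: excess_def)
  also have "\<dots> = expectation ?bound"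
  proof -
    have "expectation (\<lambda>\<omega>. tau * (1 - (\<Prod>j\<in>{1..n}. rejected j \<omega>))) = tau * (1 - (\<Prod>j\<in>{1..n}. ?p j))"
      using integrable_prod_rejected[of "{1..n}"] by (simp add: expectation_prod_rejected prob_space)
    moreover have "expectation (\<lambda>\<omega>. \<Sum>i\<in>{1..n}. excess i \<omega> * (\<Prod>j\<in>{1..n}-{i}. rejected j \<omega>))
        = (\<Sum>i\<in>{1..n}. ?e i * (\<Prod>j\<in>{1..n}-{i}. ?p j))"
      using integrable_excess_mult_prod_rejected expectation_excess_mult_prod_rejected
      by (simp add: integral_sum del: atLeastAtMost_iff)
    ultimately show ?thesis
      using integrable_prod_rejected[of "{1..n}"] integrable_excess_mult_prod_rejected
      by (subst Bochner_Integration.integral_add) auto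
  qed
  also have "\<dots> \<le> expectation principal_util"
    by (intro integral_mono integrable_bound integrable_principal_util principal_util_lower_bound)
  finally show ?thesis .
qed

lemma half_expected_max_le_expected_principal_util:
  assumes threshold: "(\<Sum>i\<in>{1..n}. expectation (excess i)) = tau"
  shows "1/2 * expectation (\<lambda>\<omega>. Max (insert 0 ((\<lambda>i. X i \<omega> - c i) ` {1..n})))
           \<le> expectation principal_util"
proof -
  have "0 \<le> (\<Sum>i\<in>{1..n}. expectation (excess i))"
    by (intro sum_nonneg) (simp add: excess_def)
  then have "0 \<le> tau" unfolding threshold .
  moreover have "integrable M (\<lambda>\<omega>. X i \<omega> - c i)" if "i \<in> {1..n}" for i
    using integrable_X[OF that] by simp
  ultimately have "expectation (\<lambda>\<omega>. Max (insert 0 ((\<lambda>i. X i \<omega> - c i) ` {1..n})))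
      \<le> tau + (\<Sum>i\<in>{1..n}. expectation (excess i))"
    unfolding excess_def[abs_def] by (rule expectation_Max_le_threshold_plus_excess[OF finite_atLeastAtMost])
  then show ?thesis
    using expected_principal_util_ge_threshold[OF threshold] threshold by linarith
qed

end

lemma spmi_threshold_guarantee:
  fixes M :: "'a measure" and X Y :: "nat \<Rightarrow> 'a \<Rightarrow> real" and D :: "nat \<Rightarrow> real measure"
  assumes "prob_space M"
    and X_measurable: "\<And>i. i \<in> {1..n} \<Longrightarrow> X i \<in> borel_measurable M"
    and distr_X: "\<And>i. i \<in> {1..n} \<Longrightarrow> distr M borel (X i) = D i"
    and D_mean: "\<And>i. i \<in> {1..n} \<Longrightarrow> integrable (D i) (\<lambda>x. x)"
    and "\<And>i \<omega>. i \<in> {1..n} \<Longrightarrow> \<omega> \<in> space M \<Longrightarrow> 0 \<le> Y i \<omega>"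
    and indep: "prob_space.indep_vars M (\<lambda>_. borel \<Otimes>\<^sub>M borel) (\<lambda>i \<omega>. (X i \<omega>, Y i \<omega>)) {1..n}"
    and "(\<lambda>\<omega>. \<sigma> (\<lambda>i. X i \<omega>) (\<lambda>i. Y i \<omega>)) \<in> measurable M (count_space UNIV)"
    and "\<And>\<omega>. \<omega> \<in> space M \<Longrightarrow>
      spmi_best_response n tau c (\<lambda>i. X i \<omega>) (\<lambda>i. Y i \<omega>) (\<sigma> (\<lambda>i. X i \<omega>) (\<lambda>i. Y i \<omega>))"
    and threshold: "(\<Sum>i\<in>{1..n}. \<integral>x. max 0 (x - c i - tau) \<partial>D i) = tau"
  shows "1/2 * (\<integral>\<omega>. Max (insert 0 ((\<lambda>i. X i \<omega> - c i) ` {1..n})) \<partial>M)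
           \<le> (\<integral>\<omega>. spmi_principal_util tau c (\<lambda>i. X i \<omega>) (\<sigma> (\<lambda>i. X i \<omega>) (\<lambda>i. Y i \<omega>)) \<partial>M)"
proof -
  interpret prob_space M by fact
  have integral_D: "(\<integral>x. f x \<partial>D i) = (\<integral>\<omega>. f (X i \<omega>) \<partial>M)"
    and integrable_D: "integrable (D i) f \<longleftrightarrow> integrable M (\<lambda>\<omega>. f (X i \<omega>))"
    if "i \<in> {1..n}" "f \<in> borel_measurable borel" for i and f :: "real \<Rightarrow> real"
    using integral_distr[OF X_measurable that(2)] integrable_distr_eq[OF X_measurable that(2)]
      distr_X that(1) by simp_all
  interpret spmi_setting M n c tau X Y \<sigma>
  proof
    show "integrable M (X i)" if "i \<in> {1..n}" for i
      using D_mean integrable_D[OF that, of "\<lambda>x. x"] that by simp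
    show "indep_vars (\<lambda>_. borel) X {1..n}"
      using indep_vars_compose2[OF indep, of "\<lambda>_. fst"] by simp
  qed fact+
  have "(\<Sum>i\<in>{1..n}. expectation (excess i)) = tau"
    using threshold integral_D by (simp add: excess_def[abs_def])
  then show ?thesis
    using half_expected_max_le_expected_principal_util
    unfolding principal_util_def[abs_def] signal_def by simp
qed

theorem mainTheorem8:
  fixes n :: nat and c :: "nat \<Rightarrow> real" and D :: "nat \<Rightarrow> real measure"
  assumes cost_nonneg: "\<forall>i\<in>{1..n}. c i \<ge> 0"
    and D_prob: "\<forall>i\<in>{1..n}. prob_space (D i) \<and> sets (D i) = sets borel"
    and D_nonneg: "\<forall>i\<in>{1..n}. AE x in D i. x \<ge> 0"
    and D_mean: "\<forall>i\<in>{1..n}. integrable (D i) (\<lambda>x. x)"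
  shows "\<exists>tau\<ge>0. \<forall>(M :: 'a measure) (X :: nat \<Rightarrow> 'a \<Rightarrow> real) (Y :: nat \<Rightarrow> 'a \<Rightarrow> real)
            (\<sigma> :: (nat \<Rightarrow> real) \<Rightarrow> (nat \<Rightarrow> real) \<Rightarrow> nat option).
     prob_space M \<and>
     (\<forall>i\<in>{1..n}. X i \<in> borel_measurable M \<and> Y i \<in> borel_measurable M \<and>
                  distr M borel (X i) = D i \<and>
                  (\<forall>\<omega>\<in>space M. X i \<omega> \<ge> 0 \<and> Y i \<omega> \<ge> 0)) \<and>
     prob_space.indep_vars M (\<lambda>_. borel \<Otimes>\<^sub>M borel) (\<lambda>i \<omega>. (X i \<omega>, Y i \<omega>)) {1..n} \<and>
     (\<lambda>\<omega>. \<sigma> (\<lambda>i. X i \<omega>) (\<lambda>i. Y i \<omega>)) \<in> measurable M (count_space UNIV) \<and>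
     (\<forall>\<omega>\<in>space M. spmi_best_response n tau c (\<lambda>i. X i \<omega>) (\<lambda>i. Y i \<omega>)
                      (\<sigma> (\<lambda>i. X i \<omega>) (\<lambda>i. Y i \<omega>)))
     \<longrightarrow> (\<integral>\<omega>. spmi_principal_util tau c (\<lambda>i. X i \<omega>) (\<sigma> (\<lambda>i. X i \<omega>) (\<lambda>i. Y i \<omega>)) \<partial>M)
         \<ge> 1/2 * (\<integral>\<omega>. Max (insert 0 ((\<lambda>i. X i \<omega> - c i) ` {1..n})) \<partial>M)"
proof -
  obtain tau where "0 \<le> tau" and threshold: "(\<Sum>i\<in>{1..n}. \<integral>x. max 0 (x - c i - tau) \<partial>D i) = tau"
    using threshold_exists[of "{1..n}" D c] D_prob D_mean by auto
  show ?thesis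
    by (intro exI[of _ tau] conjI allI impI \<open>0 \<le> tau\<close>, elim conjE)
      (rule spmi_threshold_guarantee[where D = D, OF _ _ _ _ _ _ _ _ threshold]; use D_mean in auto)
qed

end
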